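(* With the notation of the context, for every $\Gamma>0$, $$\|\mathbf 1_{B_\Gamma}\mathrm T^{{\rm b},m}\|^2_{kk_1k_2k_3}\lesssim N_{\min}N_{\rm med},$$ $$\|\mathbf 1_{B_\Gamma}\mathrm T^{{\rm b},m}\|^2_{k_1\to kk_2k_3},\ \ \|\mathbf 1_{B_\Gamma}\mathrm T^{{\rm b},m}\|^2_{k_2\to kk_1k_3},\ \ \|\mathbf 1_{B_\Gamma}\mathrm T^{{\rm b},m}\|^2_{k_3\to kk_1k_2}\ \lesssim N_{\rm med}.$$
   Context: Fix $\alpha\in(1,2)$, dyadic numbers $1\le N_1,N_2,N_3\le N$, a real number $m$ and a constant $C_0>0$. Let $S$ be the set of $(k,k_1,k_2,k_3)\in\mathbb Z^4$ with $k=k_1-k_2+k_3$, $k_2\notin\{k_1,k_3\}$, $\big||k_1|^\alpha-|k_2|^\alpha+|k_3|^\alpha-|k|^\alpha-m\big|\le C_0$, $|k|\le N$ and $|k_j|\le N_j$ for $j=1,2,3$. The base tensor is $\mathrm T^{{\rm b},m}_{kk_1k_2k_3}=\mathbf 1_S(k,k_1,k_2,k_3)$. $N_{\max}\ge N_{\rm med}\ge N_{\min}$ is the decreasing rearrangement of $N_1,N_2,N_3$; fix $j_*$ with $N_{j_*}=N_{\max}$ and let $k_{\max}=k_{j_*}$; $B_\Gamma=\{(k,k_1,k_2,k_3)\in S:|k_{\max}|\le\Gamma<|k|\}$. For a tensor $H=H_{k_A}$ and a partition $(B,C)$ of the index set $A$, $\|H\|_{k_B\to k_C}^2=\sup\{\sum_{k_C}|\sum_{k_B}H_{k_A}z_{k_B}|^2:\sum_{k_B}|z_{k_B}|^2=1\}$;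 $\|H\|_{k_A}$ is the $\ell^2_{k_A}$ norm. $A\lesssim B$ means $A\le CB$ with $C$ depending only on $\alpha$ and $C_0$. *)

theory Defs
  imports "HOL-Analysis.Analysis"
begin

type_synonym idx4 = "int \<times> int \<times> int \<times> int"   (* (k, k1, k2, k3) *)

definition dyadic :: "nat \<Rightarrow> bool" where
  "dyadic N \<longleftrightarrow> (\<exists>n::nat. N = 2 ^ n)"

definition med3 :: "nat \<Rightarrow> nat \<Rightarrow> nat \<Rightarrow> nat" where
  "med3 a b c = a + b + c - max a (max b c) - min a (min b c)"

definition resS :: "real \<Rightarrow> real \<Rightarrow> real \<Rightarrow> nat \<Rightarrow> nat \<Rightarrow> nat \<Rightarrow> nat \<Rightarrow> idx4 set" where
  "resS \<alpha> C0 m N N1 N2 N3 = {(k, k1, k2, k3).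
      k = k1 - k2 + k3 \<and> k2 \<noteq> k1 \<and> k2 \<noteq> k3 \<and>
      \<bar>(real_of_int \<bar>k1\<bar>) powr \<alpha> - (real_of_int \<bar>k2\<bar>) powr \<alpha> + (real_of_int \<bar>k3\<bar>) powr \<alpha>
        - (real_of_int \<bar>k\<bar>) powr \<alpha> - m\<bar> \<le> C0 \<and>
      \<bar>k\<bar> \<le> int N \<and> \<bar>k1\<bar> \<le> int N1 \<and> \<bar>k2\<bar> \<le> int N2 \<and> \<bar>k3\<bar> \<le> int N3}"

definition Tbase :: "real \<Rightarrow> real \<Rightarrow> real \<Rightarrow> nat \<Rightarrow> nat \<Rightarrow> nat \<Rightarrow> nat \<Rightarrow> idx4 \<Rightarrow> complex" where
  "Tbase \<alpha> C0 m N N1 N2 N3 = indicator (resS \<alpha> C0 m N N1 N2 N3)"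

definition kcomp :: "nat \<Rightarrow> idx4 \<Rightarrow> int" where
  "kcomp j x = (case x of (k, k1, k2, k3) \<Rightarrow> if j = 1 then k1 else if j = 2 then k2 else k3)"

definition Bset :: "real \<Rightarrow> real \<Rightarrow> real \<Rightarrow> nat \<Rightarrow> nat \<Rightarrow> nat \<Rightarrow> nat \<Rightarrow> nat \<Rightarrow> real \<Rightarrow> idx4 set" where
  "Bset \<alpha> C0 m N N1 N2 N3 js \<Gamma> =
     {x \<in> resS \<alpha> C0 m N N1 N2 N3. real_of_int \<bar>kcomp js x\<bar> \<le> \<Gamma> \<and> \<Gamma> < real_of_int \<bar>fst x\<bar>}"

definition hs_norm_sq :: "('a \<Rightarrow> complex) \<Rightarrow> real" where
  "hs_norm_sq H = (\<Sum>\<^sub>\<infinity>x. (cmod (H x))\<^sup>2)"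

text \<open>Squared operator norm k_B -> k_C of a tensor written as H b c
  (b = input indices, c = output indices).\<close>
definition op_norm_sq :: "('b \<Rightarrow> 'c \<Rightarrow> complex) \<Rightarrow> real" where
  "op_norm_sq H = Sup {(\<Sum>\<^sub>\<infinity>c. (cmod (\<Sum>\<^sub>\<infinity>b. H b c * z b))\<^sup>2) | z.
       (\<lambda>b. (cmod (z b))\<^sup>2) summable_on UNIV \<and> (\<Sum>\<^sub>\<infinity>b. (cmod (z b))\<^sup>2) = 1}"

end

theory Submission
  imports Defs
begin

text \<open>
  The Hilbert-Schmidt norm of the truncated tensor is the number of points of \<open>B\<^sub>\<Gamma>\<close>, and
  since the output and one input frequency determine the remaining one, each operator norm is
  at most the largest number of points of \<open>B\<^sub>\<Gamma>\<close> with one frequency \<open>k\<^sub>j\<close> fixed (a row).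
  Everything therefore reduces to showing that a row has \<open>O(L)\<close> points, where \<open>L \<le> 2 N\<^sub>m\<^sub>e\<^sub>d\<close>
  is the sum of the two non-maximal \<open>N\<^sub>i\<close>; summing the rows of the smallest frequency gives
  the Hilbert-Schmidt bound.

  A row splits into fibres along which a single integer \<open>x\<close> varies, and on each fibre the
  resonance function, a combination of \<open>|x|\<^sup>\<alpha>\<close> and of \<open>|x + c|\<^sup>\<alpha>\<close> for a fixed \<open>c\<close>, stays in a
  window of width \<open>2 C\<^sub>0\<close>; a fibre is small as soon as this combination separates points.
  If \<open>|k\<^sub>m\<^sub>a\<^sub>x| \<le> 3L\<close>, all frequencies are \<open>O(L)\<close> and convexity separates at rate
  \<open>|c| L\<^sup>\<alpha>\<^sup>-\<^sup>2\<close>, so the fibre has \<open>O(1 + L\<^sup>2\<^sup>-\<^sup>\<alpha>/|c|)\<close> points; as \<open>\<alpha> > 1\<close>, the harmonic sum over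
  \<open>|c| \<le> 4L\<close> is \<open>O(L\<^sup>\<alpha>\<^sup>-\<^sup>1)\<close> and the row has \<open>O(L)\<close> points. Otherwise \<open>|k| > 3L\<close>, the
  dispersion of the large frequency dominates that of the small ones, and each of the \<open>O(L)\<close>
  fibres has \<open>O(1)\<close> points. Exchanging \<open>k\<^sub>1\<close> and \<open>k\<^sub>3\<close> reduces to the cases where the maximal
  frequency is \<open>k\<^sub>1\<close> or \<open>k\<^sub>2\<close>.
\<close>

section \<open>Estimates for real powers\<close>

lemma powr_mean_value:
  fixes u v q :: real
  assumes "0 < u" "u < v"
  shows "\<exists>\<xi>. u < \<xi> \<and> \<xi> < v \<and> v powr q - u powr q = (v - u) * (q * \<xi> powr (q - 1))"
proof -
  have "\<And>x. u \<le> x \<Longrightarrow> x \<le> v \<Longrightarrow> ((\<lambda>x. x powr q) has_real_derivative q * x powr (q - 1)) (at x)"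
    using assms by (intro has_real_derivative_powr) auto
  from MVT2[OF assms(2) this] show ?thesis by auto
qed

lemma powr_diff_ge:
  fixes a P u v :: real
  assumes "1 < a" "0 < P" "P \<le> u" "u \<le> v"
  shows "a * P powr (a - 1) * (v - u) \<le> v powr a - u powr a"
proof (cases "u = v")
  case False
  then obtain \<xi> where \<xi>: "u < \<xi>" "\<xi> < v" "v powr a - u powr a = (v - u) * (a * \<xi> powr (a - 1))"
    using powr_mean_value[of u v a] assms by auto
  have "P powr (a - 1) \<le> \<xi> powr (a - 1)"
    using assms \<xi> by (intro powr_mono2) auto
  with assms \<xi> show ?thesis
    by (simp add: \<xi>(3) mult.commute mult.left_commute mult_left_mono)
qed simp

lemma powr_diff_le:
  fixes a L u v :: real
  assumes "1 < a" "0 \<le> u" "u \<le> v" "v \<le> L"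
  shows "v powr a - u powr a \<le> a * L powr (a - 1) * (v - u)"
proof (cases "u = 0")
  case True
  have "v powr a = v * v powr (a - 1)"
    using assms by (cases "v = 0") (auto simp: powr_diff field_simps)
  also have "\<dots> \<le> v * L powr (a - 1)"
    using assms by (intro mult_left_mono powr_mono2) auto
  also have "\<dots> \<le> a * L powr (a - 1) * v"
    using assms mult_right_mono[of 1 a "v * L powr (a - 1)"] by (simp add: algebra_simps)
  finally show ?thesis using True assms by simp
next
  case False
  show ?thesis
  proof (cases "u = v")
    case False
    with \<open>u \<noteq> 0\<close> assms obtain \<xi>
      where \<xi>: "u < \<xi>" "\<xi> < v" "v powr a - u powr a = (v - u) * (a * \<xi> powr (a - 1))"
      using powr_mean_value[of u v a] by auto
    have "\<xi> powr (a - 1) \<le> L powr (a - 1)"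
      using assms \<xi> by (intro powr_mono2) auto
    with assms \<xi> show ?thesis
      by (simp add: \<xi>(3) mult.commute mult.left_commute mult_left_mono)
  qed simp
qed

lemma abs_powr_diff_le:
  fixes a L s t :: real
  assumes "1 < a" "\<bar>s\<bar> \<le> L" "\<bar>t\<bar> \<le> L"
  shows "\<bar>\<bar>s\<bar> powr a - \<bar>t\<bar> powr a\<bar> \<le> a * L powr (a - 1) * \<bar>s - t\<bar>"
proof -
  have ordered: "\<bar>v powr a - u powr a\<bar> \<le> a * L powr (a - 1) * \<bar>v - u\<bar>"
    if "0 \<le> u" "u \<le> v" "v \<le> L" for u v
    using powr_diff_le[OF assms(1) that] powr_mono2[of a u v] that assms by simp
  have "\<bar>\<bar>s\<bar> powr a - \<bar>t\<bar> powr a\<bar> \<le> a * L powr (a - 1) * \<bar>\<bar>s\<bar> - \<bar>t\<bar>\<bar>"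
    using ordered[of "\<bar>s\<bar>" "\<bar>t\<bar>"] ordered[of "\<bar>t\<bar>" "\<bar>s\<bar>"] assms
    by (cases "\<bar>s\<bar> \<le> \<bar>t\<bar>") (auto simp: abs_minus_commute)
  also have "\<dots> \<le> a * L powr (a - 1) * \<bar>s - t\<bar>"
    using assms by (intro mult_left_mono abs_triangle_ineq3) auto
  finally show ?thesis .
qed

lemma harm_le_powr_div:
  fixes p :: real
  assumes "0 < p" "p < 1"
  shows "harm n \<le> real n powr p / p"
proof (induction n)
  case (Suc n)
  have step: "1 / (real n + 1) \<le> ((real n + 1) powr p - real n powr p) / p"
  proof (cases "n = 0")
    case False
    then obtain \<xi> where \<xi>: "real n < \<xi>" "\<xi> < real n + 1"
        "(real n + 1) powr p - real n powr p = (real n + 1 - real n) * (p * \<xi> powr (p - 1))"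
      using powr_mean_value[of "real n" "real n + 1" p] by auto
    have "1 / (real n + 1) = (real n + 1) powr (-1)"
      by (simp add: powr_minus divide_inverse)
    also have "\<dots> \<le> (real n + 1) powr (p - 1)"
      using assms by (intro powr_mono) auto
    also have "\<dots> \<le> \<xi> powr (p - 1)"
      using \<xi> False assms by (intro powr_mono2') auto
    finally have "1 / (real n + 1) \<le> \<xi> powr (p - 1)" .
    then have "p / (real n + 1) \<le> (real n + 1) powr p - real n powr p"
      using \<xi> assms by (simp add: mult_left_mono divide_inverse)
    then show ?thesis
      using assms by (simp add: field_simps)
  qed (use assms in simp)
  have "harm (Suc n) = harm n + 1 / (real n + 1)"
    by (simp add: harm_Suc field_simps)
  also have "\<dots> \<le> real n powr p / p + ((real n + 1) powr p - real n powr p) / p"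
    using Suc step by linarith
  also have "\<dots> = real (Suc n) powr p / p"
    by (simp add: diff_divide_distrib add.commute)
  finally show ?case .
qed (simp add: harm_expand)

section \<open>Second differences of the dispersion\<close>

lemma powr_second_diff_ge:
  fixes a x :: real
  assumes a: "1 < a" "a < 2" and x: "0 < x"
  shows "a * (a - 1) * (x + 2) powr (a - 2) \<le> (x + 2) powr a - 2 * (x + 1) powr a + x powr a"
proof -
  define G where "G = (\<lambda>s::real. (s + 1) powr a - s powr a)"
  define G' where "G' = (\<lambda>s::real. a * (s + 1) powr (a - 1) - a * s powr (a - 1))"
  have "(G has_real_derivative G' s) (at s)" if "x \<le> s" for s
    unfolding G_def G'_def using x that by (auto intro!: derivative_eq_intros)
  then obtain \<xi> where \<xi>: "x < \<xi>" "\<xi> < x + 1" "G (x + 1) - G x = (x + 1 - x) * G' \<xi>"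
    using MVT2[of x "x + 1" G G'] by auto
  obtain \<eta> where \<eta>: "\<xi> < \<eta>" "\<eta> < \<xi> + 1"
      "(\<xi> + 1) powr (a - 1) - \<xi> powr (a - 1) = (\<xi> + 1 - \<xi>) * ((a - 1) * \<eta> powr (a - 1 - 1))"
    using powr_mean_value[of \<xi> "\<xi> + 1" "a - 1"] \<xi> x by auto
  have "(x + 2) powr (a - 2) \<le> \<eta> powr (a - 2)"
    using \<xi> \<eta> x a by (intro powr_mono2') auto
  then have "a * (a - 1) * (x + 2) powr (a - 2) \<le> a * (a - 1) * \<eta> powr (a - 2)"
    using a by (intro mult_left_mono) auto
  also have "\<dots> = a * ((\<xi> + 1) powr (a - 1) - \<xi> powr (a - 1))"
    using \<eta>(3) by (simp add: mult.assoc)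
  also have "\<dots> = G (x + 1) - G x"
    using \<xi>(3) by (simp add: G'_def right_diff_distrib)
  also have "\<dots> = (x + 2) powr a - 2 * (x + 1) powr a + x powr a"
    by (simp add: G_def algebra_simps)
  finally show ?thesis .
qed

definition dispersion :: "real \<Rightarrow> int \<Rightarrow> real" where
  "dispersion a k = real_of_int \<bar>k\<bar> powr a"

text \<open>The second difference of \<open>|t|\<^sup>a\<close> is \<open>2\<^sup>a - 2\<close> at \<open>t = 0\<close>, \<open>2\<close> at \<open>t = -1\<close>, and at
  least \<open>a(a - 1) R\<^sup>a\<^sup>-\<^sup>2\<close> at the other \<open>t\<close> with \<open>|t|, |t + 2| \<le> R\<close>.\<close>
definition curvature_const :: "real \<Rightarrow> real" where
  "curvature_const a = min (a * (a - 1)) (2 powr a - 2)"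

lemma curvature_const_pos: "1 < a \<Longrightarrow> 0 < curvature_const a"
  using powr_less_mono[of 1 a 2] by (simp add: curvature_const_def)

lemma dispersion_second_diff_ge:
  fixes a R :: real and t :: int
  assumes a: "1 < a" "a < 2" and R: "1 \<le> R" and t: "- R \<le> t" "t + 2 \<le> R"
  shows "curvature_const a * R powr (a - 2)
    \<le> dispersion a (t + 2) - 2 * dispersion a (t + 1) + dispersion a t"
proof -
  have "R powr (a - 2) \<le> R powr 0"
    using R a by (intro powr_mono) auto
  then have "curvature_const a * R powr (a - 2) \<le> curvature_const a"
    using R curvature_const_pos[OF a(1)] by (simp add: mult_left_le)
  then have small: "curvature_const a * R powr (a - 2) \<le> min (a * (a - 1)) (2 powr a - 2)"
    by (simp add: curvature_const_def)
  have nonneg: "curvature_const a * R powr (a - 2)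
      \<le> dispersion a (s + 2) - 2 * dispersion a (s + 1) + dispersion a s"
    if "0 \<le> s" "s + 2 \<le> R" for s :: int
  proof (cases "s = 0")
    case False
    have "R powr (a - 2) \<le> (real_of_int s + 2) powr (a - 2)"
      using that a by (intro powr_mono2') auto
    then have "curvature_const a * R powr (a - 2) \<le> a * (a - 1) * (real_of_int s + 2) powr (a - 2)"
      using a curvature_const_pos[OF a(1)]
      by (intro mult_mono) (auto simp: curvature_const_def)
    also have "\<dots> \<le> (real_of_int s + 2) powr a - 2 * (real_of_int s + 1) powr a + real_of_int s powr a"
      using that False a by (intro powr_second_diff_ge) auto
    finally show ?thesis
      using that by (simp add: dispersion_def add.commute)
  qed (use small in \<open>simp add: dispersion_def\<close>)
  consider "0 \<le> t" | "t = -1" | "t \<le> -2" by linarith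
  then show ?thesis
  proof cases
    case 1
    then show ?thesis using nonneg t by auto
  next
    case 2
    have "a * (a - 1) \<le> 2 * 1"
      using a by (intro mult_mono) auto
    with 2 small show ?thesis by (simp add: dispersion_def)
  next
    case 3
    define s where "s = - t - 2"
    have "\<bar>s + 2\<bar> = \<bar>t\<bar>" "\<bar>s + 1\<bar> = \<bar>t + 1\<bar>" "\<bar>s\<bar> = \<bar>t + 2\<bar>"
      using 3 by (auto simp: s_def)
    then have "dispersion a (s + 2) - 2 * dispersion a (s + 1) + dispersion a s
        = dispersion a (t + 2) - 2 * dispersion a (t + 1) + dispersion a t"
      by (simp add: dispersion_def)
    moreover have "curvature_const a * R powr (a - 2)
        \<le> dispersion a (s + 2) - 2 * dispersion a (s + 1) + dispersion a s"
      using nonneg[of s] 3 t by (auto simp: s_def)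
    ultimately show ?thesis by simp
  qed
qed

lemma dispersion_mixed_diff_ge:
  fixes a R :: real and t :: int and c :: nat
  assumes a: "1 < a" "a < 2" and R: "1 \<le> R" and t: "- R \<le> t" "t + int c + 1 \<le> R"
  shows "real c * (curvature_const a * R powr (a - 2))
    \<le> dispersion a (t + 1 + int c) - dispersion a (t + 1) - dispersion a (t + int c) + dispersion a t"
  using t
proof (induction c)
  case (Suc c)
  have "curvature_const a * R powr (a - 2)
      \<le> dispersion a (t + int c + 2) - 2 * dispersion a (t + int c + 1) + dispersion a (t + int c)"
    using dispersion_second_diff_ge[OF a R, of "t + int c"] Suc.prems by auto
  with Suc show ?case
    by (simp add: algebra_simps)
qed simp

lemma dispersion_double_diff_ge:
  fixes a R :: real and x :: int and c d :: nat
  assumes a: "1 < a" "a < 2" and R: "1 \<le> R" and x: "- R \<le> x" "x + int c + int d \<le> R"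
  shows "real c * real d * (curvature_const a * R powr (a - 2))
    \<le> dispersion a (x + int d + int c) - dispersion a (x + int d) - dispersion a (x + int c) + dispersion a x"
  using x
proof (induction d)
  case (Suc d)
  have "real c * (curvature_const a * R powr (a - 2))
      \<le> dispersion a (x + int d + 1 + int c) - dispersion a (x + int d + 1)
        - dispersion a (x + int d + int c) + dispersion a (x + int d)"
    using dispersion_mixed_diff_ge[OF a R, of "x + int d" c] Suc.prems by auto
  with Suc show ?case
    by (simp add: algebra_simps)
qed simp

lemma dispersion_shift_diff_separated:
  fixes a R :: real and x x' c :: int
  assumes a: "1 < a" "a < 2" and R: "1 \<le> R" and xx': "x < x'"
    and bounds: "\<bar>x\<bar> \<le> R" "\<bar>x'\<bar> \<le> R" "\<bar>x + c\<bar> \<le> R" "\<bar>x' + c\<bar> \<le> R"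
  shows "\<bar>c\<bar> * curvature_const a * R powr (a - 2) * (x' - x)
    \<le> \<bar>(dispersion a x' - dispersion a (x' + c)) - (dispersion a x - dispersion a (x + c))\<bar>"
proof -
  define d where "d = nat (x' - x)"
  have x': "x' = x + int d" using xx' by (simp add: d_def)
  show ?thesis
  proof (cases "0 \<le> c")
    case True
    then obtain c' where c: "c = int c'" by (metis nonneg_eq_int)
    have "real c' * real d * (curvature_const a * R powr (a - 2))
        \<le> dispersion a (x + int d + int c') - dispersion a (x + int d) - dispersion a (x + int c') + dispersion a x"
      using dispersion_double_diff_ge[OF a R, of x c' d] bounds x' c by auto
    then show ?thesis
      using x' c by (simp add: algebra_simps abs_if split: if_splits)
  next
    case False
    then obtain c' where c: "c = - int c'" by (metis linorder_not_le neg_int_cases less_imp_le)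
    have "real c' * real d * (curvature_const a * R powr (a - 2))
        \<le> dispersion a (x + c + int d + int c') - dispersion a (x + c + int d)
          - dispersion a (x + c + int c') + dispersion a (x + c)"
      using dispersion_double_diff_ge[OF a R, of "x + c" c' d] bounds x' c by auto
    then show ?thesis
      using x' c by (simp add: algebra_simps abs_if split: if_splits)
  qed
qed

lemma dispersion_diff_ge:
  fixes a P :: real and x x' :: int
  assumes a: "1 < a" and P: "0 < P" and xx': "x < x'" "0 < x * x'" and bounds: "P \<le> \<bar>x\<bar>" "P \<le> \<bar>x'\<bar>"
  shows "a * P powr (a - 1) * (x' - x) \<le> \<bar>dispersion a x' - dispersion a x\<bar>"
proof (cases "0 < x")
  case True
  then have "a * P powr (a - 1) * (real_of_int x' - x) \<le> real_of_int x' powr a - real_of_int x powr a"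
    using powr_diff_ge[OF a P] bounds xx' by auto
  then show ?thesis using True xx' by (simp add: dispersion_def)
next
  case False
  then have "x < 0" "x' < 0" using xx' by (auto simp: zero_less_mult_iff)
  then have "a * P powr (a - 1) * (real_of_int (- x) - (- x')) \<le> real_of_int (- x) powr a - real_of_int (- x') powr a"
    using powr_diff_ge[OF a P, of "real_of_int (- x')" "real_of_int (- x)"] bounds xx' by auto
  then show ?thesis using \<open>x < 0\<close> \<open>x' < 0\<close> by (simp add: dispersion_def)
qed

definition gap_const :: "real \<Rightarrow> real" where
  "gap_const a = a * (2 powr (a - 1) - 1)"

lemma gap_const_pos: "1 < a \<Longrightarrow> 0 < gap_const a"
  using powr_less_mono[of 0 "a - 1" 2] by (simp add: gap_const_def)

text \<open>For \<open>L \<ge> 1\<close>, \<open>gap_const a\<close> bounds from below the gap between the derivative of \<open>|x|\<^sup>a\<close>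
  on \<open>|x| \<ge> 2L\<close> and its maximum on \<open>|s| \<le> L\<close>.\<close>
lemma dispersion_diff_dominates:
  fixes a L :: real and x x' s s' :: int
  assumes a: "1 < a" and L: "1 \<le> L" and xx': "x < x'" "0 < x * x'"
    and bounds: "2 * L \<le> \<bar>x\<bar>" "2 * L \<le> \<bar>x'\<bar>" "\<bar>s\<bar> \<le> L" "\<bar>s'\<bar> \<le> L"
    and ss': "\<bar>s' - s\<bar> = x' - x"
  shows "gap_const a * (x' - x) \<le> \<bar>dispersion a x' - dispersion a x\<bar> - \<bar>dispersion a s' - dispersion a s\<bar>"
proof -
  have "1 \<le> L powr (a - 1)" using L a by (simp add: ge_one_powr_ge_zero)
  moreover have "0 \<le> 2 powr (a - 1) - 1" using a by (simp add: ge_one_powr_ge_zero)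
  ultimately have "gap_const a * (x' - x) \<le> a * (2 powr (a - 1) - 1) * L powr (a - 1) * (x' - x)"
    using a xx' by (simp add: gap_const_def mult_left_mono mult_right_mono)
  also have "\<dots> = a * (2 * L) powr (a - 1) * (x' - x) - a * L powr (a - 1) * \<bar>real_of_int s' - s\<bar>"
    using L ss' by (simp add: powr_mult algebra_simps flip: of_int_diff of_int_abs)
  also have "\<dots> \<le> \<bar>dispersion a x' - dispersion a x\<bar> - \<bar>dispersion a s' - dispersion a s\<bar>"
  proof -
    have "a * (2 * L) powr (a - 1) * (x' - x) \<le> \<bar>dispersion a x' - dispersion a x\<bar>"
      using dispersion_diff_ge[OF a, of "2 * L"] L xx' bounds by auto
    moreover have "\<bar>dispersion a s' - dispersion a s\<bar> \<le> a * L powr (a - 1) * \<bar>real_of_int s' - s\<bar>"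
      using abs_powr_diff_le[OF a, of "real_of_int s'" L "real_of_int s"] bounds
      by (simp add: dispersion_def)
    ultimately show ?thesis by linarith
  qed
  finally show ?thesis .
qed

lemma dispersion_sum_diff_ge:
  fixes a :: real and x x' e :: int
  assumes a: "1 < a" and xx': "x < x'" "0 < x * x'"
    and opposite: "x * (e - x) < 0" "x' * (e - x') < 0"
  shows "a * (x' - x)
    \<le> \<bar>(dispersion a x' + dispersion a (e - x')) - (dispersion a x + dispersion a (e - x))\<bar>"
proof -
  have "1 \<le> \<bar>x\<bar>" "1 \<le> \<bar>x'\<bar>" using xx' by (auto simp: zero_less_mult_iff)
  then have diff: "a * (x' - x) \<le> \<bar>dispersion a x' - dispersion a x\<bar>"
    using dispersion_diff_ge[OF a, of 1 x x'] xx' by auto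
  show ?thesis
  proof (cases "0 < x")
    case True
    then have "e - x' < 0" "e - x < 0" "0 < x'"
      using opposite xx' by (auto simp: mult_less_0_iff)
    then have "dispersion a (e - x) \<le> dispersion a (e - x')" "dispersion a x \<le> dispersion a x'"
      unfolding dispersion_def using a True xx' by (auto intro: powr_mono2)
    then show ?thesis using diff by auto
  next
    case False
    then have "x < 0" "x' < 0" "0 < e - x'" "0 < e - x"
      using opposite xx' by (auto simp: mult_less_0_iff zero_less_mult_iff)
    then have "dispersion a (e - x') \<le> dispersion a (e - x)" "dispersion a x' \<le> dispersion a x"
      unfolding dispersion_def using a xx' by (auto intro: powr_mono2)
    then show ?thesis using diff by auto
  qed
qed

section \<open>Counting integers in a resonance window\<close>

lemma card_le_of_separated:
  fixes X :: "int set" and f :: "int \<Rightarrow> real"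
  assumes \<delta>: "0 < \<delta>" and C0: "0 \<le> C0"
    and sep: "\<And>x x'. x \<in> X \<Longrightarrow> x' \<in> X \<Longrightarrow> x < x' \<Longrightarrow> \<delta> * real_of_int (x' - x) \<le> \<bar>f x' - f x\<bar>"
    and window: "\<And>x. x \<in> X \<Longrightarrow> \<bar>f x - \<mu>\<bar> \<le> C0"
  shows "card X \<le> 2 * C0 / \<delta> + 1"
proof (cases "finite X \<and> X \<noteq> {}")
  case True
  define lo where "lo = Min X"
  define hi where "hi = Max X"
  have lo: "lo \<in> X" and hi: "hi \<in> X" and sub: "X \<subseteq> {lo..hi}"
    using True by (auto simp: lo_def hi_def)
  have "card X \<le> card {lo..hi}"
    using sub by (intro card_mono) auto
  also have "\<dots> = nat (hi - lo + 1)"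
    by simp
  finally have "int (card X) \<le> hi - lo + 1"
    using lo sub by (subst le_nat_iff[symmetric]) auto
  then have card: "real (card X) \<le> hi - lo + 1"
    by (metis of_int_of_nat_eq of_int_le_iff)
  have "hi - lo \<le> 2 * C0 / \<delta>"
  proof (cases "lo < hi")
    case True
    have "\<delta> * real_of_int (hi - lo) \<le> \<bar>f hi - f lo\<bar>"
      using sep[OF lo hi True] .
    also have "\<dots> \<le> 2 * C0"
      using window[OF lo] window[OF hi] by linarith
    finally show ?thesis
      using \<delta> by (simp add: field_simps)
  next
    case False
    moreover have "0 \<le> 2 * C0 / \<delta>" using C0 \<delta> by simp
    ultimately show ?thesis by linarith
  qed
  with card show ?thesis by linarith
next
  case False
  then have "card X = 0" by auto
  then show ?thesis using C0 \<delta> by simp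
qed

lemma card_le_of_separated_same_sign:
  fixes X :: "int set" and f :: "int \<Rightarrow> real"
  assumes \<delta>: "0 < \<delta>" and C0: "0 \<le> C0"
    and sep: "\<And>x x'. x \<in> X \<Longrightarrow> x' \<in> X \<Longrightarrow> x < x' \<Longrightarrow> 0 < x * x' \<Longrightarrow> \<delta> * real_of_int (x' - x) \<le> \<bar>f x' - f x\<bar>"
    and window: "\<And>x. x \<in> X \<Longrightarrow> \<bar>f x - \<mu>\<bar> \<le> C0"
  shows "card X \<le> 4 * C0 / \<delta> + 3"
proof (cases "finite X")
  case fin: True
  define Pos where "Pos = {x \<in> X. 0 < x}"
  define Neg where "Neg = {x \<in> X. x < 0}"
  have pos: "card Pos \<le> 2 * C0 / \<delta> + 1"
    unfolding Pos_def
  proof (rule card_le_of_separated[OF \<delta> C0, where f = f and \<mu> = \<mu>])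
    fix x x' assume "x \<in> {x \<in> X. 0 < x}" "x' \<in> {x \<in> X. 0 < x}" "x < x'"
    then show "\<delta> * real_of_int (x' - x) \<le> \<bar>f x' - f x\<bar>"
      using sep[of x x'] by (simp add: zero_less_mult_iff)
  qed (use window in simp)
  have neg: "card Neg \<le> 2 * C0 / \<delta> + 1"
    unfolding Neg_def
  proof (rule card_le_of_separated[OF \<delta> C0, where f = f and \<mu> = \<mu>])
    fix x x' assume "x \<in> {x \<in> X. x < 0}" "x' \<in> {x \<in> X. x < 0}" "x < x'"
    then show "\<delta> * real_of_int (x' - x) \<le> \<bar>f x' - f x\<bar>"
      using sep[of x x'] mult_neg_neg[of x x'] by simp
  qed (use window in simp)
  have "X \<subseteq> insert 0 (Pos \<union> Neg)"
    by (auto simp: Pos_def Neg_def)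
  then have "card X \<le> card (insert 0 (Pos \<union> Neg))"
    by (rule card_mono[rotated]) (use fin in \<open>auto simp: Pos_def Neg_def\<close>)
  also have "\<dots> \<le> Suc (card (Pos \<union> Neg))"
    by (rule card_insert_le_m1) auto
  also have "\<dots> \<le> Suc (card Pos + card Neg)"
    using card_Un_le[of Pos Neg] by simp
  finally have "real (card X) \<le> 1 + real (card Pos) + real (card Neg)"
    by linarith
  with pos neg show ?thesis
    by linarith
qed (use C0 \<delta> in simp)

lemma card_shift_fibre_le:
  fixes X :: "int set" and a R C0 \<mu> :: real and c :: int
  assumes a: "1 < a" "a < 2" and R: "1 \<le> R" and c: "c \<noteq> 0" and C0: "0 \<le> C0"
    and X: "\<And>x. x \<in> X \<Longrightarrow> real_of_int \<bar>x\<bar> \<le> R \<and> real_of_int \<bar>x + c\<bar> \<le> R \<and>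
      \<bar>dispersion a x - dispersion a (x + c) - \<mu>\<bar> \<le> C0"
  shows "card X \<le> 2 * C0 / (\<bar>c\<bar> * curvature_const a * R powr (a - 2)) + 1"
proof (rule card_le_of_separated[where f = "\<lambda>x. dispersion a x - dispersion a (x + c)"])
  show "0 < \<bar>c\<bar> * curvature_const a * R powr (a - 2)"
    using c R curvature_const_pos[OF a(1)] by auto
next
  fix x x' assume "x \<in> X" "x' \<in> X" "x < x'"
  then show "\<bar>c\<bar> * curvature_const a * R powr (a - 2) * real_of_int (x' - x)
      \<le> \<bar>dispersion a x' - dispersion a (x' + c) - (dispersion a x - dispersion a (x + c))\<bar>"
    using dispersion_shift_diff_separated[OF a R, of x x' c] X by simp
qed (use C0 X in auto)

lemma card_lipschitz_fibre_le:
  fixes X :: "int set" and a L C0 \<sigma> \<mu> :: real and e \<tau> :: int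
  assumes a: "1 < a" and L: "1 \<le> L" and \<tau>: "\<bar>\<tau>\<bar> = 1" and \<sigma>: "\<bar>\<sigma>\<bar> = 1" and C0: "0 \<le> C0"
    and X: "\<And>x. x \<in> X \<Longrightarrow> 2 * L \<le> real_of_int \<bar>x\<bar> \<and> real_of_int \<bar>e + \<tau> * x\<bar> \<le> L \<and>
      \<bar>dispersion a x + \<sigma> * dispersion a (e + \<tau> * x) - \<mu>\<bar> \<le> C0"
  shows "card X \<le> 4 * C0 / gap_const a + 3"
proof (rule card_le_of_separated_same_sign[where f = "\<lambda>x. dispersion a x + \<sigma> * dispersion a (e + \<tau> * x)"])
  fix x x' assume x: "x \<in> X" "x' \<in> X" "x < x'" "0 < x * x'"
  have "\<bar>(e + \<tau> * x') - (e + \<tau> * x)\<bar> = x' - x"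
    using \<tau> x(3) by (simp add: abs_mult flip: right_diff_distrib)
  then have "gap_const a * real_of_int (x' - x)
      \<le> \<bar>dispersion a x' - dispersion a x\<bar> - \<bar>dispersion a (e + \<tau> * x') - dispersion a (e + \<tau> * x)\<bar>"
    using dispersion_diff_dominates[OF a L x(3,4)] X[OF x(1)] X[OF x(2)] by simp
  also have "\<dots> \<le> \<bar>dispersion a x' + \<sigma> * dispersion a (e + \<tau> * x')
      - (dispersion a x + \<sigma> * dispersion a (e + \<tau> * x))\<bar>"
  proof -
    define u where "u = dispersion a x' - dispersion a x"
    define v where "v = dispersion a (e + \<tau> * x') - dispersion a (e + \<tau> * x)"
    have "\<bar>u\<bar> \<le> \<bar>u + \<sigma> * v\<bar> + \<bar>- \<sigma> * v\<bar>"
      using abs_triangle_ineq[of "u + \<sigma> * v" "- \<sigma> * v"] by simp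
    then have "\<bar>u\<bar> - \<bar>v\<bar> \<le> \<bar>u + \<sigma> * v\<bar>"
      using \<sigma> by (simp add: abs_mult)
    then show ?thesis
      by (simp add: u_def v_def algebra_simps)
  qed
  finally show "gap_const a * real_of_int (x' - x) \<le> \<bar>dispersion a x' + \<sigma> * dispersion a (e + \<tau> * x')
      - (dispersion a x + \<sigma> * dispersion a (e + \<tau> * x))\<bar>" .
qed (use a C0 X gap_const_pos in auto)

lemma card_opposite_fibre_le:
  fixes X :: "int set" and a C0 \<mu> :: real and e :: int
  assumes a: "1 < a" and C0: "0 \<le> C0"
    and X: "\<And>x. x \<in> X \<Longrightarrow> x * (e - x) < 0 \<and> \<bar>dispersion a x + dispersion a (e - x) - \<mu>\<bar> \<le> C0"
  shows "card X \<le> 4 * C0 / a + 3"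
proof (rule card_le_of_separated_same_sign[where f = "\<lambda>x. dispersion a x + dispersion a (e - x)"])
  fix x x' assume "x \<in> X" "x' \<in> X" "x < x'" "0 < x * x'"
  then show "a * real_of_int (x' - x)
      \<le> \<bar>dispersion a x' + dispersion a (e - x') - (dispersion a x + dispersion a (e - x))\<bar>"
    using dispersion_sum_diff_ge[OF a, of x x' e] X by simp
qed (use a C0 X in auto)

lemma card_le_sum_card_fibres:
  assumes Y: "finite Y" and g: "g ` F \<subseteq> Y" and inj: "\<And>y. inj_on h {r \<in> F. g r = y}"
  shows "card F \<le> (\<Sum>y\<in>Y. card (h ` {r \<in> F. g r = y}))"
proof -
  have "F = (\<Union>y\<in>Y. {r \<in> F. g r = y})"
    using g by auto
  then have "card F \<le> (\<Sum>y\<in>Y. card {r \<in> F. g r = y})"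
    using card_UN_le[OF Y] by metis
  also have "\<dots> = (\<Sum>y\<in>Y. card (h ` {r \<in> F. g r = y}))"
    using inj by (simp add: card_image)
  finally show ?thesis .
qed

lemma card_le_card_mult_of_fibres:
  fixes P :: real
  assumes Y: "finite Y" and g: "g ` F \<subseteq> Y" and inj: "\<And>y. inj_on h {r \<in> F. g r = y}"
    and fibre: "\<And>y. y \<in> Y \<Longrightarrow> card (h ` {r \<in> F. g r = y}) \<le> P"
  shows "card F \<le> card Y * P"
proof -
  have "card F \<le> (\<Sum>y\<in>Y. real (card (h ` {r \<in> F. g r = y})))"
    using card_le_sum_card_fibres[OF Y g inj] by (metis of_nat_le_iff of_nat_sum)
  also have "\<dots> \<le> (\<Sum>y\<in>Y. P)"
    using fibre by (rule sum_mono)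
  finally show ?thesis by simp
qed

lemma sum_inverse_dist_eq:
  "(\<Sum>y\<in>{y\<^sub>0 - int M..y\<^sub>0 + int M}. 1 / \<bar>real_of_int (y - y\<^sub>0)\<bar>) = 2 * harm M"
proof -
  have "(\<Sum>y\<in>{y\<^sub>0 - int M..y\<^sub>0 + int M}. 1 / \<bar>real_of_int (y - y\<^sub>0)\<bar>)
      = (\<Sum>z\<in>{- int M..int M}. 1 / \<bar>real_of_int z\<bar>)"
    by (rule sum.reindex_bij_witness[of _ "\<lambda>z. z + y\<^sub>0" "\<lambda>y. y - y\<^sub>0"]) auto
  also have "\<dots> = 2 * harm M"
  proof (induction M)
    case (Suc M)
    have "{- int (Suc M)..int (Suc M)} = insert (- int (Suc M)) (insert (int (Suc M)) {- int M..int M})"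
      by auto
    with Suc show ?case
      by (simp add: harm_Suc field_simps)
  qed (simp add: harm_expand)
  finally show ?thesis .
qed

lemma card_shell_le: "card {y::int. G < \<bar>y\<bar> \<and> \<bar>y\<bar> \<le> G + int L} \<le> 2 * L"
proof -
  have "{y::int. G < \<bar>y\<bar> \<and> \<bar>y\<bar> \<le> G + int L} \<subseteq> {- (G + int L)..- (G + 1)} \<union> {G + 1..G + int L}"
    by auto
  then have "card {y::int. G < \<bar>y\<bar> \<and> \<bar>y\<bar> \<le> G + int L}
      \<le> card ({- (G + int L)..- (G + 1)} \<union> {G + 1..G + int L})"
    by (intro card_mono) auto
  also have "\<dots> \<le> card {- (G + int L)..- (G + 1)} + card {G + 1..G + int L}"
    by (rule card_Un_le)
  also have "\<dots> \<le> 2 * L"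
    by simp
  finally show ?thesis .
qed

lemma card_le_shift_fibres:
  fixes F :: "'r set" and g h h' :: "'r \<Rightarrow> int" and c :: "int \<Rightarrow> int" and \<mu> :: "int \<Rightarrow> real" and L :: nat
  assumes a: "1 < a" "a < 2" and C0: "0 \<le> C0" and L: "1 \<le> L"
    and c: "\<And>y. \<bar>c y\<bar> = \<bar>y - y\<^sub>0\<bar>"
    and inj: "\<And>y. inj_on h {r \<in> F. g r = y}"
    and fibre: "\<And>r. r \<in> F \<Longrightarrow> g r \<noteq> y\<^sub>0 \<and> \<bar>g r - y\<^sub>0\<bar> \<le> 4 * int L \<and>
      \<bar>h r\<bar> \<le> 4 * int L \<and> \<bar>h' r\<bar> \<le> 4 * int L \<and> h' r = h r + c (g r) \<and>
      \<bar>dispersion a (h r) - dispersion a (h' r) - \<mu> (g r)\<bar> \<le> C0"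
  shows "card F \<le> (9 + 16 * C0 / (curvature_const a * (a - 1))) * L"
proof -
  define R where "R = 4 * real L"
  define Y where "Y = {y\<^sub>0 - int (4 * L)..y\<^sub>0 + int (4 * L)}"
  define B where "B = 2 * C0 / (curvature_const a * R powr (a - 2))"
  have R: "1 \<le> R" using L by (simp add: R_def)
  have \<kappa>: "0 < curvature_const a" using curvature_const_pos a by auto
  have B: "0 \<le> B" using C0 \<kappa> by (simp add: B_def)
  have g: "g ` F \<subseteq> Y"
    using fibre by (force simp: Y_def abs_le_iff)
  have fibre_le: "card (h ` {r \<in> F. g r = y}) \<le> 1 + B * (1 / \<bar>real_of_int (y - y\<^sub>0)\<bar>)" for y
  proof (cases "y = y\<^sub>0")
    case False
    have "card (h ` {r \<in> F. g r = y}) \<le> 2 * C0 / (\<bar>c y\<bar> * curvature_const a * R powr (a - 2)) + 1"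
    proof (rule card_shift_fibre_le[OF a R _ C0])
      show "c y \<noteq> 0" using c[of y] False by simp
    next
      fix x assume "x \<in> h ` {r \<in> F. g r = y}"
      then obtain r where "r \<in> F" "g r = y" "x = h r" by blast
      with fibre[of r] show "real_of_int \<bar>x\<bar> \<le> R \<and> real_of_int \<bar>x + c y\<bar> \<le> R \<and>
          \<bar>dispersion a x - dispersion a (x + c y) - \<mu> y\<bar> \<le> C0"
        by (auto simp: R_def simp flip: of_int_abs)
    qed
    then show ?thesis using c[of y] by (simp add: B_def field_simps)
  next
    case True
    then have "{r \<in> F. g r = y} = {}" using fibre by auto
    then have "card (h ` {r \<in> F. g r = y}) = 0" by (metis card.empty image_empty)
    then show ?thesis using B by simp
  qed
  have "card F \<le> (\<Sum>y\<in>Y. real (card (h ` {r \<in> F. g r = y})))"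
    using card_le_sum_card_fibres[OF _ g inj] by (metis Y_def finite_atLeastAtMost_int of_nat_le_iff of_nat_sum)
  also have "\<dots> \<le> (\<Sum>y\<in>Y. 1 + B * (1 / \<bar>real_of_int (y - y\<^sub>0)\<bar>))"
    using fibre_le by (rule sum_mono)
  also have "\<dots> = card Y + B * (\<Sum>y\<in>Y. 1 / \<bar>real_of_int (y - y\<^sub>0)\<bar>)"
    by (simp add: sum.distrib sum_distrib_left)
  also have "\<dots> = card Y + B * (2 * harm (4 * L))"
    unfolding Y_def sum_inverse_dist_eq ..
  also have "\<dots> \<le> 9 * real L + B * (2 * (R powr (a - 1) / (a - 1)))"
  proof (intro add_mono mult_left_mono)
    show "real (card Y) \<le> 9 * real L" using L by (simp add: Y_def)
    show "harm (4 * L) \<le> R powr (a - 1) / (a - 1)"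
      using harm_le_powr_div[of "a - 1" "4 * L"] a by (simp add: R_def)
  qed (use B in auto)
  also have "\<dots> = (9 + 16 * C0 / (curvature_const a * (a - 1))) * L"
  proof -
    have "R powr (a - 1) = R powr (a - 2) * R"
      using R powr_add[of R "a - 2" 1] by simp
    then show ?thesis
      using \<kappa> a R by (simp add: B_def R_def field_simps)
  qed
  finally show ?thesis .
qed

lemma card_le_lipschitz_fibres:
  fixes F :: "'r set" and g h p :: "'r \<Rightarrow> int" and e :: "int \<Rightarrow> int" and \<tau> :: int
    and \<sigma> :: real and \<mu> :: "int \<Rightarrow> real" and Y :: "int set" and L :: nat
  assumes a: "1 < a" and C0: "0 \<le> C0" and L: "1 \<le> L" and \<tau>: "\<bar>\<tau>\<bar> = 1" and \<sigma>: "\<bar>\<sigma>\<bar> = 1"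
    and Y: "finite Y" "card Y \<le> 3 * L"
    and inj: "\<And>y. inj_on h {r \<in> F. g r = y}"
    and fibre: "\<And>r. r \<in> F \<Longrightarrow> g r \<in> Y \<and> 2 * int L \<le> \<bar>h r\<bar> \<and> \<bar>p r\<bar> \<le> int L \<and>
      p r = e (g r) + \<tau> * h r \<and> \<bar>dispersion a (h r) + \<sigma> * dispersion a (p r) - \<mu> (g r)\<bar> \<le> C0"
  shows "card F \<le> 3 * (4 * C0 / gap_const a + 3) * L"
proof -
  have "card F \<le> card Y * (4 * C0 / gap_const a + 3)"
  proof (rule card_le_card_mult_of_fibres[OF Y(1) _ inj])
    show "g ` F \<subseteq> Y" using fibre by auto
  next
    fix y
    show "card (h ` {r \<in> F. g r = y}) \<le> 4 * C0 / gap_const a + 3"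
    proof (rule card_lipschitz_fibre_le[OF a _ \<tau> \<sigma> C0, where L = "real L" and e = "e y"])
      fix x assume "x \<in> h ` {r \<in> F. g r = y}"
      then obtain r where "r \<in> F" "g r = y" "x = h r" by blast
      with fibre[of r] have "2 * int L \<le> \<bar>x\<bar>" "\<bar>e y + \<tau> * x\<bar> \<le> int L"
        "\<bar>dispersion a x + \<sigma> * dispersion a (e y + \<tau> * x) - \<mu> y\<bar> \<le> C0"
        by auto
      then show "2 * real L \<le> real_of_int \<bar>x\<bar> \<and> real_of_int \<bar>e y + \<tau> * x\<bar> \<le> real L \<and>
          \<bar>dispersion a x + \<sigma> * dispersion a (e y + \<tau> * x) - \<mu> y\<bar> \<le> C0"
        using of_int_le_iff[where 'a = real, of "2 * int L" "\<bar>x\<bar>"]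
          of_int_le_iff[where 'a = real, of "\<bar>e y + \<tau> * x\<bar>" "int L"] by simp
    qed (use L in simp)
  qed
  also have "\<dots> \<le> 3 * L * (4 * C0 / gap_const a + 3)"
    using Y(2) C0 gap_const_pos[OF a] by (intro mult_right_mono) auto
  finally show ?thesis by (simp add: algebra_simps)
qed

lemma card_le_opposite_fibres:
  fixes F :: "'r set" and g h p :: "'r \<Rightarrow> int" and e :: "int \<Rightarrow> int"
    and \<mu> :: "int \<Rightarrow> real" and Y :: "int set" and L :: nat
  assumes a: "1 < a" and C0: "0 \<le> C0"
    and Y: "finite Y" "card Y \<le> 3 * L"
    and inj: "\<And>y. inj_on h {r \<in> F. g r = y}"
    and fibre: "\<And>r. r \<in> F \<Longrightarrow> g r \<in> Y \<and> h r * p r < 0 \<and> h r + p r = e (g r) \<and>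
      \<bar>dispersion a (h r) + dispersion a (p r) - \<mu> (g r)\<bar> \<le> C0"
  shows "card F \<le> 3 * (4 * C0 / a + 3) * L"
proof -
  have "card F \<le> card Y * (4 * C0 / a + 3)"
  proof (rule card_le_card_mult_of_fibres[OF Y(1) _ inj])
    show "g ` F \<subseteq> Y" using fibre by auto
  next
    fix y
    show "card (h ` {r \<in> F. g r = y}) \<le> 4 * C0 / a + 3"
    proof (rule card_opposite_fibre_le[OF a C0, where e = "e y"])
      fix x assume "x \<in> h ` {r \<in> F. g r = y}"
      then obtain r where r: "r \<in> F" "g r = y" "x = h r" by blast
      with fibre[of r] have "p r = e y - x" by auto
      with fibre[OF r(1)] r show "x * (e y - x) < 0 \<and> \<bar>dispersion a x + dispersion a (e y - x) - \<mu> y\<bar> \<le> C0"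
        by simp
    qed
  qed
  also have "\<dots> \<le> 3 * L * (4 * C0 / a + 3)"
    using Y(2) C0 a by (intro mult_right_mono) auto
  finally show ?thesis by (simp add: algebra_simps)
qed

section \<open>Rows of the truncated resonant set\<close>

lemma kcomp_simps [simp]:
  "kcomp 1 (k, k1, k2, k3) = k1" "kcomp (Suc 0) (k, k1, k2, k3) = k1"
  "kcomp 2 (k, k1, k2, k3) = k2" "kcomp 3 (k, k1, k2, k3) = k3"
  by (simp_all add: kcomp_def)

lemma mem_Bset_iff:
  "(k, k1, k2, k3) \<in> Bset a C0 m N N1 N2 N3 js \<Gamma> \<longleftrightarrow>
    k = k1 - k2 + k3 \<and> k2 \<noteq> k1 \<and> k2 \<noteq> k3 \<and>
    \<bar>dispersion a k1 - dispersion a k2 + dispersion a k3 - dispersion a k - m\<bar> \<le> C0 \<and>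
    \<bar>k\<bar> \<le> int N \<and> \<bar>k1\<bar> \<le> int N1 \<and> \<bar>k2\<bar> \<le> int N2 \<and> \<bar>k3\<bar> \<le> int N3 \<and>
    \<bar>kcomp js (k, k1, k2, k3)\<bar> \<le> \<lfloor>\<Gamma>\<rfloor> \<and> \<lfloor>\<Gamma>\<rfloor> < \<bar>k\<bar>"
  unfolding Bset_def resS_def dispersion_def le_floor_iff floor_less_iff by auto

lemma finite_Bset: "finite (Bset a C0 m N N1 N2 N3 js \<Gamma>)"
proof (rule finite_subset)
  show "Bset a C0 m N N1 N2 N3 js \<Gamma> \<subseteq> {- int N..int N} \<times> {- int N1..int N1} \<times> {- int N2..int N2} \<times> {- int N3..int N3}"
    by (auto simp: Bset_def resS_def abs_le_iff)
qed simp

definition row_const :: "real \<Rightarrow> real \<Rightarrow> real" where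
  "row_const a C0 = 9 + 16 * C0 / (curvature_const a * (a - 1)) + 3 * (4 * C0 / gap_const a + 4 * C0 / a + 6)"

lemma row_const_ge:
  assumes "1 < a" "0 \<le> C0"
  shows "9 + 16 * C0 / (curvature_const a * (a - 1)) \<le> row_const a C0"
    and "3 * (4 * C0 / gap_const a + 3) \<le> row_const a C0"
    and "3 * (4 * C0 / a + 3) \<le> row_const a C0"
  using assms curvature_const_pos[of a] gap_const_pos[of a] by (auto simp: row_const_def)

lemma row_const_pos: "1 < a \<Longrightarrow> 0 \<le> C0 \<Longrightarrow> 0 < row_const a C0"
  using row_const_ge(1)[of a C0] curvature_const_pos[of a] by (smt (verit) divide_nonneg_pos mult_pos_pos)

lemma mult_neg_if_abs_add_le:
  fixes x y G :: int
  assumes "\<bar>x\<bar> \<le> G" "G < \<bar>y\<bar>" "\<bar>x + y\<bar> \<le> G"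
  shows "x * y < 0"
  using assms by (auto simp: mult_less_0_iff abs_if split: if_splits)

lemma card_Bset1_row1_le:
  fixes a C0 m \<Gamma> :: real and a0 :: int
  assumes a: "1 < a" "a < 2" and C0: "0 \<le> C0" and L: "1 \<le> N2 + N3"
  shows "card {r \<in> Bset a C0 m N N1 N2 N3 1 \<Gamma>. kcomp 1 r = a0} \<le> row_const a C0 * (N2 + N3)"
proof -
  define F where "F = {r \<in> Bset a C0 m N N1 N2 N3 1 \<Gamma>. kcomp 1 r = a0}"
  define L where "L = N2 + N3"
  obtain G where G: "\<lfloor>\<Gamma>\<rfloor> = G" by simp
  note mem = F_def mem_Bset_iff G L_def
  have "card F \<le> (9 + 16 * C0 / (curvature_const a * (a - 1))) * L"
  proof (rule card_le_shift_fibres[OF a C0, where g = fst and h = "kcomp 3" and h' = "kcomp 2"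
        and c = "\<lambda>y. a0 - y" and y\<^sub>0 = a0 and \<mu> = "\<lambda>y. m - dispersion a a0 + dispersion a y"])
    show "\<And>y. inj_on (kcomp 3) {r \<in> F. fst r = y}"
      by (auto simp: inj_on_def mem)
  qed (use L in \<open>auto simp: mem abs_le_iff\<close>)
  then have "card F \<le> row_const a C0 * L"
    using row_const_ge(1)[OF a(1) C0] by (meson mult_right_mono of_nat_0_le_iff order_trans)
  then show ?thesis by (simp add: F_def L_def)
qed

lemma card_Bset1_row2_le:
  fixes a C0 m \<Gamma> :: real and a0 :: int
  assumes a: "1 < a" "a < 2" and C0: "0 \<le> C0" and L: "1 \<le> N2 + N3"
  shows "card {r \<in> Bset a C0 m N N1 N2 N3 1 \<Gamma>. kcomp 2 r = a0} \<le> row_const a C0 * (N2 + N3)"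
proof -
  define F where "F = {r \<in> Bset a C0 m N N1 N2 N3 1 \<Gamma>. kcomp 2 r = a0}"
  define L where "L = N2 + N3"
  obtain G where G: "\<lfloor>\<Gamma>\<rfloor> = G" by simp
  note mem = F_def mem_Bset_iff G L_def
  have "card F \<le> row_const a C0 * L"
  proof (cases "G \<le> 3 * int L")
    case True
    have "card F \<le> (9 + 16 * C0 / (curvature_const a * (a - 1))) * L"
    proof (rule card_le_shift_fibres[OF a C0, where g = "kcomp 1" and h = "kcomp 3" and h' = fst
          and c = "\<lambda>y. y - a0" and y\<^sub>0 = a0 and \<mu> = "\<lambda>y. m - dispersion a y + dispersion a a0"])
      show "\<And>y. inj_on (kcomp 3) {r \<in> F. kcomp 1 r = y}"
        by (auto simp: inj_on_def mem)
    qed (use True L in \<open>auto simp: mem abs_le_iff\<close>)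
    then show ?thesis using row_const_ge(1)[OF a(1) C0] by (meson mult_right_mono of_nat_0_le_iff order_trans)
  next
    case False
    have "card F \<le> 3 * (4 * C0 / gap_const a + 3) * L"
    proof (rule card_le_lipschitz_fibres[OF a(1) C0, where g = fst and h = "kcomp 1" and p = "kcomp 3"
          and e = "\<lambda>y. y + a0" and \<tau> = "-1" and \<sigma> = 1 and \<mu> = "\<lambda>y. m + dispersion a a0 + dispersion a y"
          and Y = "{y. G < \<bar>y\<bar> \<and> \<bar>y\<bar> \<le> G + int L}"])
      show "card {y. G < \<bar>y\<bar> \<and> \<bar>y\<bar> \<le> G + int L} \<le> 3 * L"
        using card_shell_le[of G L] by simp
      show "finite {y. G < \<bar>y\<bar> \<and> \<bar>y\<bar> \<le> G + int L}"
        by (rule finite_subset[of _ "{- (G + int L)..G + int L}"]) auto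
      show "\<And>y. inj_on (kcomp 1) {r \<in> F. fst r = y}"
        by (auto simp: inj_on_def mem)
    qed (use False L in \<open>auto simp: mem abs_le_iff\<close>)
    then show ?thesis using row_const_ge(2)[OF a(1) C0] by (meson mult_right_mono of_nat_0_le_iff order_trans)
  qed
  then show ?thesis by (simp add: F_def L_def)
qed

lemma card_Bset1_row3_le:
  fixes a C0 m \<Gamma> :: real and a0 :: int
  assumes a: "1 < a" "a < 2" and C0: "0 \<le> C0" and L: "1 \<le> N2 + N3"
  shows "card {r \<in> Bset a C0 m N N1 N2 N3 1 \<Gamma>. kcomp 3 r = a0} \<le> row_const a C0 * (N2 + N3)"
proof -
  define F where "F = {r \<in> Bset a C0 m N N1 N2 N3 1 \<Gamma>. kcomp 3 r = a0}"
  define L where "L = N2 + N3"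
  obtain G where G: "\<lfloor>\<Gamma>\<rfloor> = G" by simp
  note mem = F_def mem_Bset_iff G L_def
  have "card F \<le> row_const a C0 * L"
  proof (cases "G \<le> 3 * int L")
    case True
    have "card F \<le> (9 + 16 * C0 / (curvature_const a * (a - 1))) * L"
    proof (rule card_le_shift_fibres[OF a C0, where g = "kcomp 2" and h = "kcomp 1" and h' = fst
          and c = "\<lambda>y. a0 - y" and y\<^sub>0 = a0 and \<mu> = "\<lambda>y. m + dispersion a y - dispersion a a0"])
      show "\<And>y. inj_on (kcomp 1) {r \<in> F. kcomp 2 r = y}"
        by (auto simp: inj_on_def mem)
    qed (use True L in \<open>auto simp: mem abs_le_iff\<close>)
    then show ?thesis using row_const_ge(1)[OF a(1) C0] by (meson mult_right_mono of_nat_0_le_iff order_trans)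
  next
    case False
    have "card F \<le> 3 * (4 * C0 / gap_const a + 3) * L"
    proof (rule card_le_lipschitz_fibres[OF a(1) C0, where g = fst and h = "kcomp 1" and p = "kcomp 2"
          and e = "\<lambda>y. a0 - y" and \<tau> = 1 and \<sigma> = "-1" and \<mu> = "\<lambda>y. m - dispersion a a0 + dispersion a y"
          and Y = "{y. G < \<bar>y\<bar> \<and> \<bar>y\<bar> \<le> G + int L}"])
      show "card {y. G < \<bar>y\<bar> \<and> \<bar>y\<bar> \<le> G + int L} \<le> 3 * L"
        using card_shell_le[of G L] by simp
      show "finite {y. G < \<bar>y\<bar> \<and> \<bar>y\<bar> \<le> G + int L}"
        by (rule finite_subset[of _ "{- (G + int L)..G + int L}"]) auto
      show "\<And>y. inj_on (kcomp 1) {r \<in> F. fst r = y}"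
        by (auto simp: inj_on_def mem)
    qed (use False L in \<open>auto simp: mem abs_le_iff\<close>)
    then show ?thesis using row_const_ge(2)[OF a(1) C0] by (meson mult_right_mono of_nat_0_le_iff order_trans)
  qed
  then show ?thesis by (simp add: F_def L_def)
qed

lemma card_Bset2_row1_le:
  fixes a C0 m \<Gamma> :: real and a0 :: int
  assumes a: "1 < a" "a < 2" and C0: "0 \<le> C0" and L: "1 \<le> N1 + N3"
  shows "card {r \<in> Bset a C0 m N N1 N2 N3 2 \<Gamma>. kcomp 1 r = a0} \<le> row_const a C0 * (N1 + N3)"
proof -
  define F where "F = {r \<in> Bset a C0 m N N1 N2 N3 2 \<Gamma>. kcomp 1 r = a0}"
  define L where "L = N1 + N3"
  obtain G where G: "\<lfloor>\<Gamma>\<rfloor> = G" by simp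
  note mem = F_def mem_Bset_iff G L_def
  have "card F \<le> row_const a C0 * L"
  proof (cases "G \<le> 3 * int L")
    case True
    have "card F \<le> (9 + 16 * C0 / (curvature_const a * (a - 1))) * L"
    proof (rule card_le_shift_fibres[OF a C0, where g = "kcomp 2" and h = "kcomp 3" and h' = fst
          and c = "\<lambda>y. a0 - y" and y\<^sub>0 = a0 and \<mu> = "\<lambda>y. m - dispersion a a0 + dispersion a y"])
      show "\<And>y. inj_on (kcomp 3) {r \<in> F. kcomp 2 r = y}"
        by (auto simp: inj_on_def mem)
    qed (use True L in \<open>auto simp: mem abs_le_iff\<close>)
    then show ?thesis using row_const_ge(1)[OF a(1) C0] by (meson mult_right_mono of_nat_0_le_iff order_trans)
  next
    case False
    have "card F \<le> 3 * (4 * C0 / a + 3) * L"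
    proof (rule card_le_opposite_fibres[OF a(1) C0, where g = "kcomp 3" and h = "kcomp 2" and p = fst
          and e = "\<lambda>y. a0 + y" and \<mu> = "\<lambda>y. dispersion a a0 + dispersion a y - m"
          and Y = "{- int N3..int N3}"])
      show "card {- int N3..int N3} \<le> 3 * L"
        using L by (simp add: L_def)
      show "\<And>y. inj_on (kcomp 2) {r \<in> F. kcomp 3 r = y}"
        by (auto simp: inj_on_def mem)
      fix r assume "r \<in> F"
      then obtain k k1 k2 k3 where r: "r = (k, k1, k2, k3)" "(k, k1, k2, k3) \<in> F"
        by (cases r) auto
      then have "k2 * k < 0"
        using False by (intro mult_neg_if_abs_add_le[of _ G]) (auto simp: mem abs_le_iff)
      with r show "kcomp 3 r \<in> {- int N3..int N3} \<and> kcomp 2 r * fst r < 0 \<and> kcomp 2 r + fst r = a0 + kcomp 3 r \<and>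
          \<bar>dispersion a (kcomp 2 r) + dispersion a (fst r) - (dispersion a a0 + dispersion a (kcomp 3 r) - m)\<bar> \<le> C0"
        by (auto simp: mem abs_le_iff)
    qed simp
    then show ?thesis using row_const_ge(3)[OF a(1) C0] by (meson mult_right_mono of_nat_0_le_iff order_trans)
  qed
  then show ?thesis by (simp add: F_def L_def)
qed

lemma card_Bset2_row2_le:
  fixes a C0 m \<Gamma> :: real and a0 :: int
  assumes a: "1 < a" "a < 2" and C0: "0 \<le> C0" and L: "1 \<le> N1 + N3"
  shows "card {r \<in> Bset a C0 m N N1 N2 N3 2 \<Gamma>. kcomp 2 r = a0} \<le> row_const a C0 * (N1 + N3)"
proof -
  define F where "F = {r \<in> Bset a C0 m N N1 N2 N3 2 \<Gamma>. kcomp 2 r = a0}"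
  define L where "L = N1 + N3"
  obtain G where G: "\<lfloor>\<Gamma>\<rfloor> = G" by simp
  note mem = F_def mem_Bset_iff G L_def
  have "card F \<le> row_const a C0 * L"
  proof (cases "G \<le> 3 * int L")
    case True
    have "card F \<le> (9 + 16 * C0 / (curvature_const a * (a - 1))) * L"
    proof (rule card_le_shift_fibres[OF a C0, where g = "kcomp 1" and h = "kcomp 3" and h' = fst
          and c = "\<lambda>y. y - a0" and y\<^sub>0 = a0 and \<mu> = "\<lambda>y. m - dispersion a y + dispersion a a0"])
      show "\<And>y. inj_on (kcomp 3) {r \<in> F. kcomp 1 r = y}"
        by (auto simp: inj_on_def mem)
    qed (use True L in \<open>auto simp: mem abs_le_iff\<close>)
    then show ?thesis using row_const_ge(1)[OF a(1) C0] by (meson mult_right_mono of_nat_0_le_iff order_trans)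
  next
    case False
    have "card F \<le> 3 * (4 * C0 / gap_const a + 3) * L"
    proof (rule card_le_lipschitz_fibres[OF a(1) C0, where g = "kcomp 1" and h = fst and p = "kcomp 3"
          and e = "\<lambda>y. a0 - y" and \<tau> = 1 and \<sigma> = "-1" and \<mu> = "\<lambda>y. dispersion a y - dispersion a a0 - m"
          and Y = "{- int N1..int N1}"])
      show "card {- int N1..int N1} \<le> 3 * L"
        using L by (simp add: L_def)
      show "\<And>y. inj_on fst {r \<in> F. kcomp 1 r = y}"
        by (auto simp: inj_on_def mem)
    qed (use False L in \<open>auto simp: mem abs_le_iff\<close>)
    then show ?thesis using row_const_ge(2)[OF a(1) C0] by (meson mult_right_mono of_nat_0_le_iff order_trans)
  qed
  then show ?thesis by (simp add: F_def L_def)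
qed

definition mirror :: "idx4 \<Rightarrow> idx4" where
  "mirror = (\<lambda>(k, k1, k2, k3). (k, k3, k2, k1))"

lemma mirror_simp [simp]: "mirror (k, k1, k2, k3) = (k, k3, k2, k1)"
  by (simp add: mirror_def)

lemma mirror_mirror [simp]: "mirror (mirror r) = r"
  by (cases r) simp

lemma kcomp_mirror: "j \<in> {1, 2, 3} \<Longrightarrow> kcomp (4 - j) (mirror r) = kcomp j r"
  by (cases r) (auto simp: kcomp_def)

lemma mirror_mem_Bset_iff:
  assumes "js \<in> {1, 2, 3}"
  shows "mirror r \<in> Bset a C0 m N N3 N2 N1 (4 - js) \<Gamma> \<longleftrightarrow> r \<in> Bset a C0 m N N1 N2 N3 js \<Gamma>"
proof (cases r)
  case (fields k k1 k2 k3)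
  have "dispersion a k3 - dispersion a k2 + dispersion a k1 = dispersion a k1 - dispersion a k2 + dispersion a k3"
    by simp
  with kcomp_mirror[OF assms, of r] show ?thesis
    unfolding fields mirror_simp mem_Bset_iff by auto
qed

lemma card_row_mirror:
  assumes js: "js \<in> {1, 2, 3}" and j: "j \<in> {1, 2, 3}"
  shows "card {r \<in> Bset a C0 m N N1 N2 N3 js \<Gamma>. kcomp j r = a0}
    = card {r \<in> Bset a C0 m N N3 N2 N1 (4 - js) \<Gamma>. kcomp (4 - j) r = a0}"
    (is "card ?A = card ?B")
proof (rule bij_betw_same_card[of mirror])
  have mem: "mirror r \<in> ?B \<longleftrightarrow> r \<in> ?A" for r
    using mirror_mem_Bset_iff[OF js] kcomp_mirror[OF j] by simp
  show "bij_betw mirror ?A ?B"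
  proof (rule bij_betwI[where g = mirror])
    show "mirror \<in> ?A \<rightarrow> ?B" using mem by blast
    show "mirror \<in> ?B \<rightarrow> ?A" using mem[of "mirror _"] by simp
  qed simp_all
qed

lemma card_row_le:
  fixes a C0 m \<Gamma> :: real and a0 :: int
  assumes a: "1 < a" "a < 2" and C0: "0 \<le> C0" and N: "1 \<le> N1" "1 \<le> N2" "1 \<le> N3"
    and js: "js \<in> {1, 2, 3}" and j: "j \<in> {1, 2, 3}"
  shows "card {r \<in> Bset a C0 m N N1 N2 N3 js \<Gamma>. kcomp j r = a0}
    \<le> row_const a C0 * real (if js = 1 then N2 + N3 else if js = 2 then N1 + N3 else N1 + N2)"
proof -
  have js1: "card {r \<in> Bset a C0 m N M1 N2 M3 1 \<Gamma>. kcomp l r = a0} \<le> row_const a C0 * (N2 + M3)"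
    if "l \<in> {1, 2, 3}" "1 \<le> N2 + M3" for M1 M3 l
    using that card_Bset1_row1_le[OF a C0 that(2)] card_Bset1_row2_le[OF a C0 that(2)]
      card_Bset1_row3_le[OF a C0 that(2)] by auto
  have js2: "card {r \<in> Bset a C0 m N M1 N2 M3 2 \<Gamma>. kcomp l r = a0} \<le> row_const a C0 * (M1 + M3)"
    if "l \<in> {1, 2}" "1 \<le> M1 + M3" for M1 M3 l
    using that card_Bset2_row1_le[OF a C0 that(2)] card_Bset2_row2_le[OF a C0 that(2)] by auto
  consider "js = 1" | "js = 2" "j \<noteq> 3" | "js = 2" "j = 3" | "js = 3"
    using js by auto
  then show ?thesis
  proof cases
    case 1
    then show ?thesis using js1[of j N3 N1] j N by simp
  next
    case 2
    then show ?thesis using js2[of j N1 N3] j N by simp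
  next
    case 3
    then show ?thesis using js2[of 1 N3 N1] card_row_mirror[OF js j] N by (simp add: add.commute)
  next
    case 4
    have "4 - j \<in> {1, 2, 3}" using j by auto
    with 4 show ?thesis using js1[of "4 - j" N1 N3] card_row_mirror[OF js j] N by (simp add: add.commute)
  qed
qed

section \<open>Tensor norms\<close>

lemma op_norm_sq_le:
  fixes H :: "'b \<Rightarrow> 'c \<Rightarrow> complex"
  assumes "\<And>z. (\<lambda>b. (cmod (z b))\<^sup>2) summable_on UNIV \<Longrightarrow> (\<Sum>\<^sub>\<infinity>b. (cmod (z b))\<^sup>2) = 1 \<Longrightarrow>
    (\<Sum>\<^sub>\<infinity>c. (cmod (\<Sum>\<^sub>\<infinity>b. H b c * z b))\<^sup>2) \<le> M"
  shows "op_norm_sq H \<le> M"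
proof -
  define e :: "'b \<Rightarrow> complex" where "e = (\<lambda>b. if b = undefined then 1 else 0)"
  have "(\<lambda>b. (cmod (e b))\<^sup>2) summable_on UNIV \<longleftrightarrow> (\<lambda>b. (cmod (e b))\<^sup>2) summable_on {undefined}"
    by (rule summable_on_cong_neutral) (auto simp: e_def)
  moreover have "(\<Sum>\<^sub>\<infinity>b. (cmod (e b))\<^sup>2) = (\<Sum>\<^sub>\<infinity>b\<in>{undefined}. (cmod (e b))\<^sup>2)"
    by (rule infsum_cong_neutral) (auto simp: e_def)
  ultimately have "(\<lambda>b. (cmod (e b))\<^sup>2) summable_on UNIV \<and> (\<Sum>\<^sub>\<infinity>b. (cmod (e b))\<^sup>2) = 1"
    by (simp add: e_def)
  then show ?thesis
    unfolding op_norm_sq_def using assms by (intro cSup_least) auto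
qed

lemma op_norm_sq_le_of_sparse:
  fixes H :: "'b \<Rightarrow> 'c \<Rightarrow> complex" and \<beta> :: "'c \<Rightarrow> 'b" and M :: real
  assumes fin: "finite {c. \<exists>b. H b c \<noteq> 0}"
    and column: "\<And>b c. H b c \<noteq> 0 \<Longrightarrow> b = \<beta> c"
    and entry: "\<And>b c. cmod (H b c) \<le> 1"
    and row: "\<And>b. card {c. H b c \<noteq> 0} \<le> M"
  shows "op_norm_sq H \<le> M"
proof (rule op_norm_sq_le)
  fix z :: "'b \<Rightarrow> complex"
  assume z: "(\<lambda>b. (cmod (z b))\<^sup>2) summable_on UNIV" "(\<Sum>\<^sub>\<infinity>b. (cmod (z b))\<^sup>2) = 1"
  define C where "C = {c. \<exists>b. H b c \<noteq> 0}"
  define w where "w = (\<lambda>b. (cmod (z b))\<^sup>2)"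
  have M: "0 \<le> M" using row[of undefined] by simp
  have fibre_card: "card {c \<in> C. \<beta> c = b} \<le> M" for b
  proof -
    have "{c \<in> C. \<beta> c = b} \<subseteq> {c. H b c \<noteq> 0}"
      using column by (auto simp: C_def)
    then have "card {c \<in> C. \<beta> c = b} \<le> card {c. H b c \<noteq> 0}"
      by (rule card_mono[rotated]) (rule finite_subset[OF _ fin], auto)
    with row[of b] show ?thesis by linarith
  qed
  have inner: "(\<Sum>\<^sub>\<infinity>b. H b c * z b) = H (\<beta> c) c * z (\<beta> c)" for c
  proof -
    have "(\<Sum>\<^sub>\<infinity>b. H b c * z b) = (\<Sum>\<^sub>\<infinity>b\<in>{\<beta> c}. H b c * z b)"
      by (rule infsum_cong_neutral) (use column in auto)
    then show ?thesis by simp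
  qed
  have "(\<Sum>\<^sub>\<infinity>c. (cmod (\<Sum>\<^sub>\<infinity>b. H b c * z b))\<^sup>2) = (\<Sum>c\<in>C. (cmod (H (\<beta> c) c * z (\<beta> c)))\<^sup>2)"
    unfolding inner using fin by (subst infsum_cong_neutral[where T = C]) (auto simp: C_def)
  also have "\<dots> \<le> (\<Sum>c\<in>C. w (\<beta> c))"
    using entry by (intro sum_mono) (auto simp: w_def norm_mult mult_left_le_one_le power_mono)
  also have "\<dots> = (\<Sum>b\<in>\<beta> ` C. \<Sum>c\<in>{c \<in> C. \<beta> c = b}. w (\<beta> c))"
    using fin unfolding C_def by (rule sum.image_gen)
  also have "\<dots> = (\<Sum>b\<in>\<beta> ` C. card {c \<in> C. \<beta> c = b} * w b)"
    by (intro sum.cong) auto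
  also have "\<dots> \<le> (\<Sum>b\<in>\<beta> ` C. M * w b)"
    using fibre_card by (intro sum_mono mult_right_mono) (auto simp: w_def)
  also have "\<dots> = M * (\<Sum>\<^sub>\<infinity>b\<in>\<beta> ` C. w b)"
    using fin by (simp add: C_def sum_distrib_left)
  also have "\<dots> \<le> M * (\<Sum>\<^sub>\<infinity>b. w b)"
    using M fin z(1) by (intro mult_left_mono infsum_mono_neutral) (auto simp: C_def w_def)
  finally show "(\<Sum>\<^sub>\<infinity>c. (cmod (\<Sum>\<^sub>\<infinity>b. H b c * z b))\<^sup>2) \<le> M"
    using z(2) by (simp add: w_def)
qed

lemma op_norm_sq_indicator_le:
  fixes B :: "'a set" and H :: "'b \<Rightarrow> 'c \<Rightarrow> complex" and emb :: "'b \<Rightarrow> 'c \<Rightarrow> 'a"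
    and g :: "'a \<Rightarrow> 'b" and pj :: "'a \<Rightarrow> 'c" and \<beta> :: "'c \<Rightarrow> 'b" and M :: real
  assumes H: "\<And>b c. H b c = indicator B (emb b c)" and fin: "finite B"
    and emb: "\<And>b c. emb b c \<in> B \<Longrightarrow> b = \<beta> c \<and> g (emb b c) = b \<and> pj (emb b c) = c"
    and rows: "\<And>b. card {r \<in> B. g r = b} \<le> M"
  shows "op_norm_sq H \<le> M"
proof (rule op_norm_sq_le_of_sparse[where \<beta> = \<beta>])
  have support: "{c. H b c \<noteq> 0} \<subseteq> pj ` {r \<in> B. g r = b}" for b
    using H emb by (force simp: indicator_def split: if_splits)
  have "{c. \<exists>b. H b c \<noteq> 0} \<subseteq> pj ` B"
    using H emb by (force simp: indicator_def split: if_splits)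
  then show "finite {c. \<exists>b. H b c \<noteq> 0}"
    using fin by (rule finite_subset[OF _ finite_imageI])
  show "\<And>b c. H b c \<noteq> 0 \<Longrightarrow> b = \<beta> c"
    using H emb by (auto simp: indicator_def split: if_splits)
  show "\<And>b c. cmod (H b c) \<le> 1"
    using H by (simp add: indicator_def)
  fix b
  have "card {c. H b c \<noteq> 0} \<le> card (pj ` {r \<in> B. g r = b})"
    using support fin by (intro card_mono) auto
  also have "\<dots> \<le> card {r \<in> B. g r = b}"
    using fin by (intro card_image_le) auto
  finally show "card {c. H b c \<noteq> 0} \<le> M"
    using rows[of b] by linarith
qed

lemma op_norm_sq_resonant_indicator_le:
  fixes B :: "idx4 set" and M :: real
  assumes fin: "finite B" and resonant: "\<And>k k1 k2 k3. (k, k1, k2, k3) \<in> B \<Longrightarrow> k = k1 - k2 + k3"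
    and rows: "\<And>j b. j \<in> {1, 2, 3} \<Longrightarrow> card {r \<in> B. kcomp j r = b} \<le> M"
  shows "op_norm_sq (\<lambda>k1 (k, k2, k3). indicator B (k, k1, k2, k3) :: complex) \<le> M"
    and "op_norm_sq (\<lambda>k2 (k, k1, k3). indicator B (k, k1, k2, k3) :: complex) \<le> M"
    and "op_norm_sq (\<lambda>k3 (k, k1, k2). indicator B (k, k1, k2, k3) :: complex) \<le> M"
proof -
  show "op_norm_sq (\<lambda>k1 (k, k2, k3). indicator B (k, k1, k2, k3) :: complex) \<le> M"
    by (rule op_norm_sq_indicator_le[OF _ fin, where emb = "\<lambda>b (k, k2, k3). (k, b, k2, k3)"
          and \<beta> = "\<lambda>(k, k2, k3). k + k2 - k3" and pj = "\<lambda>(k, k1, k2, k3). (k, k2, k3)" and g = "kcomp 1"])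
      (auto simp: rows dest: resonant split: prod.splits)
  show "op_norm_sq (\<lambda>k2 (k, k1, k3). indicator B (k, k1, k2, k3) :: complex) \<le> M"
    by (rule op_norm_sq_indicator_le[OF _ fin, where emb = "\<lambda>b (k, k1, k3). (k, k1, b, k3)"
          and \<beta> = "\<lambda>(k, k1, k3). k1 + k3 - k" and pj = "\<lambda>(k, k1, k2, k3). (k, k1, k3)" and g = "kcomp 2"])
      (auto simp: rows dest: resonant split: prod.splits)
  show "op_norm_sq (\<lambda>k3 (k, k1, k2). indicator B (k, k1, k2, k3) :: complex) \<le> M"
    by (rule op_norm_sq_indicator_le[OF _ fin, where emb = "\<lambda>b (k, k1, k2). (k, k1, k2, b)"
          and \<beta> = "\<lambda>(k, k1, k2). k - k1 + k2" and pj = "\<lambda>(k, k1, k2, k3). (k, k1, k2)" and g = "kcomp 3"])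
      (auto simp: rows dest: resonant split: prod.splits)
qed

lemma hs_norm_sq_indicator_le:
  fixes B :: "'a set" and g :: "'a \<Rightarrow> int" and M :: real
  assumes fin: "finite B" and g: "g ` B \<subseteq> {- int n..int n}"
    and rows: "\<And>y. card {r \<in> B. g r = y} \<le> M"
  shows "hs_norm_sq (\<lambda>x. indicator B x :: complex) \<le> (2 * real n + 1) * M"
proof -
  have "hs_norm_sq (\<lambda>x. indicator B x :: complex) = (\<Sum>\<^sub>\<infinity>x\<in>B. 1)"
    unfolding hs_norm_sq_def by (rule infsum_cong_neutral) (auto simp: indicator_def)
  also have "\<dots> = card B"
    using fin by simp
  also have "\<dots> \<le> card {- int n..int n} * M"
    by (rule card_le_card_mult_of_fibres[OF _ g, where h = id]) (use rows in auto)
  finally show ?thesis by simp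
qed

lemma indicator_Bset_mult_Tbase:
  "(\<lambda>x. indicator (Bset a C0 m N N1 N2 N3 js \<Gamma>) x * Tbase a C0 m N N1 N2 N3 x) = indicator (Bset a C0 m N N1 N2 N3 js \<Gamma>)"
  by (auto simp: Tbase_def Bset_def indicator_def)

lemma sum_of_others_le_med3:
  assumes "js \<in> {1, 2, 3}" "(if js = 1 then N1 else if js = 2 then N2 else N3) = max N1 (max N2 N3)"
  shows "(if js = 1 then N2 + N3 else if js = 2 then N1 + N3 else N1 + N2) \<le> 2 * med3 N1 N2 N3"
  using assms unfolding med3_def by (auto simp: max_def min_def split: if_splits)

lemma Bset_tensor_norms_le:
  fixes a C0 m \<Gamma> :: real and N N1 N2 N3 js :: nat
  assumes a: "1 < a" "a < 2" and C0: "0 \<le> C0" and N: "1 \<le> N1" "1 \<le> N2" "1 \<le> N3"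
    and js: "js \<in> {1, 2, 3}" and max: "(if js = 1 then N1 else if js = 2 then N2 else N3) = max N1 (max N2 N3)"
  defines "B \<equiv> Bset a C0 m N N1 N2 N3 js \<Gamma>" and "C \<equiv> 6 * row_const a C0"
  shows "hs_norm_sq (indicator B :: idx4 \<Rightarrow> complex) \<le> C * min N1 (min N2 N3) * med3 N1 N2 N3"
    and "op_norm_sq (\<lambda>k1 (k, k2, k3). indicator B (k, k1, k2, k3) :: complex) \<le> C * med3 N1 N2 N3"
    and "op_norm_sq (\<lambda>k2 (k, k1, k3). indicator B (k, k1, k2, k3) :: complex) \<le> C * med3 N1 N2 N3"
    and "op_norm_sq (\<lambda>k3 (k, k1, k2). indicator B (k, k1, k2, k3) :: complex) \<le> C * med3 N1 N2 N3"
proof -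
  define M where "M = row_const a C0 * real (2 * med3 N1 N2 N3)"
  have K: "0 < row_const a C0" using row_const_pos a C0 by simp
  have rows: "card {r \<in> B. kcomp j r = b} \<le> M" if "j \<in> {1, 2, 3}" for j b
  proof -
    have "card {r \<in> B. kcomp j r = b}
        \<le> row_const a C0 * (if js = 1 then N2 + N3 else if js = 2 then N1 + N3 else N1 + N2)"
      unfolding B_def by (rule card_row_le[OF a C0 N js that])
    also have "\<dots> \<le> M"
      using sum_of_others_le_med3[OF js max] K unfolding M_def by (intro mult_left_mono of_nat_mono) auto
    finally show ?thesis .
  qed
  have fin: "finite B" by (simp add: B_def finite_Bset)
  have M_le: "M \<le> C * med3 N1 N2 N3"
    using K by (simp add: M_def C_def)
  define j0 where "j0 = (if N1 \<le> N2 \<and> N1 \<le> N3 then 1 else if N2 \<le> N3 then 2 else 3 :: nat)"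
  have "kcomp j0 ` B \<subseteq> {- int (min N1 (min N2 N3))..int (min N1 (min N2 N3))}"
    by (force simp: B_def mem_Bset_iff j0_def abs_le_iff)
  moreover have "j0 \<in> {1, 2, 3}" by (simp add: j0_def)
  ultimately have "hs_norm_sq (indicator B :: idx4 \<Rightarrow> complex) \<le> (2 * real (min N1 (min N2 N3)) + 1) * M"
    using hs_norm_sq_indicator_le[OF fin _ rows] by blast
  also have "\<dots> \<le> 3 * min N1 (min N2 N3) * M"
    using N K by (intro mult_right_mono) (auto simp: M_def)
  finally show "hs_norm_sq (indicator B :: idx4 \<Rightarrow> complex) \<le> C * min N1 (min N2 N3) * med3 N1 N2 N3"
    by (simp add: M_def C_def mult_ac)
  have "op_norm_sq (\<lambda>k1 (k, k2, k3). indicator B (k, k1, k2, k3) :: complex) \<le> M"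
    and "op_norm_sq (\<lambda>k2 (k, k1, k3). indicator B (k, k1, k2, k3) :: complex) \<le> M"
    and "op_norm_sq (\<lambda>k3 (k, k1, k2). indicator B (k, k1, k2, k3) :: complex) \<le> M"
    using op_norm_sq_resonant_indicator_le[OF fin _ rows] by (auto simp: B_def mem_Bset_iff)
  with M_le show "op_norm_sq (\<lambda>k1 (k, k2, k3). indicator B (k, k1, k2, k3) :: complex) \<le> C * med3 N1 N2 N3"
    and "op_norm_sq (\<lambda>k2 (k, k1, k3). indicator B (k, k1, k2, k3) :: complex) \<le> C * med3 N1 N2 N3"
    and "op_norm_sq (\<lambda>k3 (k, k1, k2). indicator B (k, k1, k2, k3) :: complex) \<le> C * med3 N1 N2 N3"
    by linarith+
qed

theorem corollary2p16:
  fixes \<alpha> C0 :: real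
  assumes "1 < \<alpha>" and "\<alpha> < 2" and "0 < C0"
  shows "\<exists>C>0. \<forall>(N::nat) (N1::nat) (N2::nat) (N3::nat) (m::real) (\<Gamma>::real) (js::nat).
     dyadic N \<and> dyadic N1 \<and> dyadic N2 \<and> dyadic N3 \<and>
     1 \<le> N1 \<and> 1 \<le> N2 \<and> 1 \<le> N3 \<and> N1 \<le> N \<and> N2 \<le> N \<and> N3 \<le> N \<and>
     js \<in> {1, 2, 3} \<and>
     (if js = 1 then N1 else if js = 2 then N2 else N3) = max N1 (max N2 N3) \<and>
     0 < \<Gamma> \<longrightarrow>
     (let T = (\<lambda>x. indicator (Bset \<alpha> C0 m N N1 N2 N3 js \<Gamma>) x * Tbase \<alpha> C0 m N N1 N2 N3 x);
          Nmin = real (min N1 (min N2 N3)); Nmed = real (med3 N1 N2 N3) in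
        hs_norm_sq T \<le> C * Nmin * Nmed \<and>
        op_norm_sq (\<lambda>k1 (k, k2, k3). T (k, k1, k2, k3)) \<le> C * Nmed \<and>
        op_norm_sq (\<lambda>k2 (k, k1, k3). T (k, k1, k2, k3)) \<le> C * Nmed \<and>
        op_norm_sq (\<lambda>k3 (k, k1, k2). T (k, k1, k2, k3)) \<le> C * Nmed)"
proof (intro exI[of _ "6 * row_const \<alpha> C0"] conjI allI impI)
  show "0 < 6 * row_const \<alpha> C0"
    using row_const_pos assms by simp
qed (use Bset_tensor_norms_le assms in \<open>simp_all add: Let_def indicator_Bset_mult_Tbase\<close>)

end
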